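(* Let $\mathcal{G}$ be an ultragraph, $R$ a unital commutative ring, and $\{R_e,D_A,f_e\}_{e\in\mathcal{G}^1,A\in\mathcal{G}^0}$ a $\mathcal{G}$-algebraic branching system on a set $X$. Let $M$ be the $R$-module of all maps $X\to R$. Then there exists a unique $R$-algebra homomorphism $\pi:L_R(\mathcal{G})\to \mathrm{Hom}_R(M)$ such that, for each $e\in\mathcal{G}^1$, $A\in\mathcal{G}^0$ and $\phi\in M$: $\pi(s_e)(\phi)=(\phi\circ f_e^{-1})\cdot 1_{R_e}$, $\pi(s_e^* )(\phi)=(\phi\circ f_e)\cdot 1_{D_{r(e)}}$ and $\pi(p_A)(\phi)=1_{D_A}\phi$. Here $(\phi\circ f_e^{-1})\cdot 1_{R_e}$ denotes the map that equals $\phi(f_e^{-1}(x))$ at $x\in R_e$ and $0$ elsewhere, and $(\phi\circ f_e)\cdot 1_{D_{r(e)}}$ the map that equals $\phi(f_e(x))$ at $x\in D_{r(e)}$ and $0$ elsewhere.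
   Context: An ultragraph $\mathcal{G}=(G^0,\mathcal{G}^1,r,s)$ consists of sets $G^0$, $\mathcal{G}^1$, a map $s:\mathcal{G}^1\to G^0$ and a map $r:\mathcal{G}^1\to P(G^0)\setminus\{\emptyset\}$. $\mathcal{G}^0$ is the smallest subset of $P(G^0)$ containing $\{v\}$ ($v\in G^0$) and $r(e)$ ($e\in\mathcal{G}^1$), closed under finite unions and intersections; write $p_v=p_{\{v\}}$, $D_v=D_{\{v\}}$. $L_R(\mathcal{G})$ is the universal $R$-algebra generated by $\{s_e,s_e^*:e\in\mathcal{G}^1\}\cup\{p_A:A\in\mathcal{G}^0\}$ subject to: (1) $p_\emptyset=0$, $p_Ap_B=p_{A\cap B}$, $p_{A\cup B}=p_A+p_B-p_{A\cap B}$; (2) $p_{s(e)}s_e=s_ep_{r(e)}=s_e$, $p_{r(e)}s_e^*=s_e^*p_{s(e)}=s_e^*$; (3) $s_e^*s_f=\delta_{e,f}p_{r(e)}$; (4) $p_v=\sum_{s(e)=v}s_es_e^*$ whenever $0<|s^{-1}(v)|<\infty$. A $\mathcal{G}$-algebraic branching system on $X$ is a family of subsets $R_e,D_A\subseteq X$ and maps $f_e$ with: (i) $R_e\cap R_f=\emptyset$ for $e\neq f$; (ii) $D_\emptyset=\emptyset$, $D_A\cap D_B=D_{A\cap B}$, $D_A\cup D_B=D_{A\cup B}$; (iii) $R_e\subseteq D_{s(e)}$; (iv) $D_v=\bigcup_{e\in s^{-1}(v)}R_e$ whenever $0<|s^{-1}(v)|<\infty$; (v) $f_e:D_{r(e)}\to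 R_e$ is a bijection with inverse $f_e^{-1}$. $1_Y$ denotes the characteristic function of $Y\subseteq X$; $\mathrm{Hom}_R(M)$ is the algebra of $R$-module endomorphisms of $M$. *)

theory Defs
  imports Main
begin

definition ultragraph :: "'v set \<Rightarrow> 'e set \<Rightarrow> ('e \<Rightarrow> 'v) \<Rightarrow> ('e \<Rightarrow> 'v set) \<Rightarrow> bool" where
  "ultragraph V E s r \<longleftrightarrow> (\<forall>e\<in>E. s e \<in> V \<and> r e \<subseteq> V \<and> r e \<noteq> {})"

inductive_set gzero :: "'v set \<Rightarrow> 'e set \<Rightarrow> ('e \<Rightarrow> 'v set) \<Rightarrow> 'v set set"
  for V :: "'v set" and E :: "'e set" and r :: "'e \<Rightarrow> 'v set" where
  gz_vertex: "v \<in> V \<Longrightarrow> {v} \<in> gzero V E r"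
| gz_range: "e \<in> E \<Longrightarrow> r e \<in> gzero V E r"
| gz_empty: "{} \<in> gzero V E r"
| gz_union: "A \<in> gzero V E r \<Longrightarrow> B \<in> gzero V E r \<Longrightarrow> A \<union> B \<in> gzero V E r"
| gz_inter: "A \<in> gzero V E r \<Longrightarrow> B \<in> gzero V E r \<Longrightarrow> A \<inter> B \<in> gzero V E r"

datatype ('v, 'e) ugen = GS 'e | GSstar 'e | GP "'v set"

definition valid_gen :: "'v set \<Rightarrow> 'e set \<Rightarrow> ('e \<Rightarrow> 'v set) \<Rightarrow> ('v, 'e) ugen \<Rightarrow> bool" where
  "valid_gen V E r g = (case g of GS e \<Rightarrow> e \<in> E | GSstar e \<Rightarrow> e \<in> E | GP A \<Rightarrow> A \<in> gzero V E r)"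

text \<open>Elements of the free non-unital algebra: finitely supported R-valued functions on
nonempty words over the generators.\<close>

definition lp_free :: "'v set \<Rightarrow> 'e set \<Rightarrow> ('e \<Rightarrow> 'v set)
    \<Rightarrow> (('v, 'e) ugen list \<Rightarrow> 'r::comm_ring_1) set" where
  "lp_free V E r = {a. finite {w. a w \<noteq> 0} \<and> a [] = 0 \<and>
      (\<forall>w. a w \<noteq> 0 \<longrightarrow> (\<forall>g\<in>set w. valid_gen V E r g))}"

definition fa_zero :: "'g list \<Rightarrow> 'r::comm_ring_1" where
  "fa_zero = (\<lambda>w. 0)"

definition fa_add :: "('g list \<Rightarrow> 'r::comm_ring_1) \<Rightarrow> ('g list \<Rightarrow> 'r) \<Rightarrow> 'g list \<Rightarrow> 'r" where
  "fa_add a b = (\<lambda>w. a w + b w)"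

definition fa_sub :: "('g list \<Rightarrow> 'r::comm_ring_1) \<Rightarrow> ('g list \<Rightarrow> 'r) \<Rightarrow> 'g list \<Rightarrow> 'r" where
  "fa_sub a b = (\<lambda>w. a w - b w)"

definition fa_smult :: "'r::comm_ring_1 \<Rightarrow> ('g list \<Rightarrow> 'r) \<Rightarrow> 'g list \<Rightarrow> 'r" where
  "fa_smult c a = (\<lambda>w. c * a w)"

text \<open>Concatenation product (words of length at least one on each side).\<close>

definition fa_mult :: "('g list \<Rightarrow> 'r::comm_ring_1) \<Rightarrow> ('g list \<Rightarrow> 'r) \<Rightarrow> 'g list \<Rightarrow> 'r" where
  "fa_mult a b = (\<lambda>w. \<Sum>i\<in>{1..<length w}. a (take i w) * b (drop i w))"

definition fa_gen :: "'g \<Rightarrow> 'g list \<Rightarrow> 'r::comm_ring_1" where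
  "fa_gen g = (\<lambda>w. if w = [g] then 1 else 0)"

definition lp_rels :: "'v set \<Rightarrow> 'e set \<Rightarrow> ('e \<Rightarrow> 'v) \<Rightarrow> ('e \<Rightarrow> 'v set)
    \<Rightarrow> (('v, 'e) ugen list \<Rightarrow> 'r::comm_ring_1) set" where
  "lp_rels V E s r =
     {fa_gen (GP {})}
   \<union> {fa_sub (fa_mult (fa_gen (GP A)) (fa_gen (GP B))) (fa_gen (GP (A \<inter> B))) | A B.
        A \<in> gzero V E r \<and> B \<in> gzero V E r}
   \<union> {fa_sub (fa_gen (GP (A \<union> B)))
        (fa_sub (fa_add (fa_gen (GP A)) (fa_gen (GP B))) (fa_gen (GP (A \<inter> B)))) | A B.
        A \<in> gzero V E r \<and> B \<in> gzero V E r}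
   \<union> {fa_sub (fa_mult (fa_gen (GP {s e})) (fa_gen (GS e))) (fa_gen (GS e)) | e. e \<in> E}
   \<union> {fa_sub (fa_mult (fa_gen (GS e)) (fa_gen (GP (r e)))) (fa_gen (GS e)) | e. e \<in> E}
   \<union> {fa_sub (fa_mult (fa_gen (GP (r e))) (fa_gen (GSstar e))) (fa_gen (GSstar e)) | e. e \<in> E}
   \<union> {fa_sub (fa_mult (fa_gen (GSstar e)) (fa_gen (GP {s e}))) (fa_gen (GSstar e)) | e. e \<in> E}
   \<union> {fa_sub (fa_mult (fa_gen (GSstar e)) (fa_gen (GS f)))
        (if e = f then fa_gen (GP (r e)) else fa_zero) | e f. e \<in> E \<and> f \<in> E}
   \<union> {fa_sub (fa_gen (GP {v}))
        (\<lambda>w. \<Sum>e\<in>{e\<in>E. s e = v}. fa_mult (fa_gen (GS e)) (fa_gen (GSstar e)) w) | v.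
        v \<in> V \<and> finite {e\<in>E. s e = v} \<and> {e\<in>E. s e = v} \<noteq> {}}"

inductive_set lp_ideal :: "'v set \<Rightarrow> 'e set \<Rightarrow> ('e \<Rightarrow> 'v) \<Rightarrow> ('e \<Rightarrow> 'v set)
    \<Rightarrow> (('v, 'e) ugen list \<Rightarrow> 'r::comm_ring_1) set"
  for V :: "'v set" and E :: "'e set" and s :: "'e \<Rightarrow> 'v" and r :: "'e \<Rightarrow> 'v set" where
  li_rel: "a \<in> lp_rels V E s r \<Longrightarrow> a \<in> lp_ideal V E s r"
| li_zero: "fa_zero \<in> lp_ideal V E s r"
| li_add: "a \<in> lp_ideal V E s r \<Longrightarrow> b \<in> lp_ideal V E s r \<Longrightarrow> fa_add a b \<in> lp_ideal V E s r"
| li_smult: "a \<in> lp_ideal V E s r \<Longrightarrow> fa_smult c a \<in> lp_ideal V E s r"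
| li_lmult: "b \<in> lp_free V E r \<Longrightarrow> a \<in> lp_ideal V E s r \<Longrightarrow> fa_mult b a \<in> lp_ideal V E s r"
| li_rmult: "b \<in> lp_free V E r \<Longrightarrow> a \<in> lp_ideal V E s r \<Longrightarrow> fa_mult a b \<in> lp_ideal V E s r"

definition lp_class :: "'v set \<Rightarrow> 'e set \<Rightarrow> ('e \<Rightarrow> 'v) \<Rightarrow> ('e \<Rightarrow> 'v set)
    \<Rightarrow> (('v, 'e) ugen list \<Rightarrow> 'r::comm_ring_1) \<Rightarrow> (('v, 'e) ugen list \<Rightarrow> 'r) set" where
  "lp_class V E s r a = {b \<in> lp_free V E r. fa_sub a b \<in> lp_ideal V E s r}"

definition LPA :: "'v set \<Rightarrow> 'e set \<Rightarrow> ('e \<Rightarrow> 'v) \<Rightarrow> ('e \<Rightarrow> 'v set)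
    \<Rightarrow> (('v, 'e) ugen list \<Rightarrow> 'r::comm_ring_1) set set" where
  "LPA V E s r = lp_class V E s r ` lp_free V E r"

definition lp_rep :: "'a set \<Rightarrow> 'a" where
  "lp_rep X = (SOME a. a \<in> X)"

definition LPA_add where
  "LPA_add V E s r X Y = lp_class V E s r (fa_add (lp_rep X) (lp_rep Y))"

definition LPA_mult where
  "LPA_mult V E s r X Y = lp_class V E s r (fa_mult (lp_rep X) (lp_rep Y))"

definition LPA_smult where
  "LPA_smult V E s r c X = lp_class V E s r (fa_smult c (lp_rep X))"

definition LPA_s where "LPA_s V E s r e = lp_class V E s r (fa_gen (GS e))"
definition LPA_sstar where "LPA_sstar V E s r e = lp_class V E s r (fa_gen (GSstar e))"
definition LPA_p where "LPA_p V E s r A = lp_class V E s r (fa_gen (GP A))"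

text \<open>The set X is the universe of the type 'x.\<close>

definition branching_system :: "'v set \<Rightarrow> 'e set \<Rightarrow> ('e \<Rightarrow> 'v) \<Rightarrow> ('e \<Rightarrow> 'v set)
    \<Rightarrow> ('e \<Rightarrow> 'x set) \<Rightarrow> ('v set \<Rightarrow> 'x set) \<Rightarrow> ('e \<Rightarrow> 'x \<Rightarrow> 'x) \<Rightarrow> bool" where
  "branching_system V E s r RR D f \<longleftrightarrow>
     (\<forall>e\<in>E. \<forall>e'\<in>E. e \<noteq> e' \<longrightarrow> RR e \<inter> RR e' = {})
   \<and> D {} = {}
   \<and> (\<forall>A\<in>gzero V E r. \<forall>B\<in>gzero V E r. D A \<inter> D B = D (A \<inter> B) \<and> D A \<union> D B = D (A \<union> B))
   \<and> (\<forall>e\<in>E. RR e \<subseteq> D {s e})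
   \<and> (\<forall>v\<in>V. finite {e\<in>E. s e = v} \<and> {e\<in>E. s e = v} \<noteq> {}
          \<longrightarrow> D {v} = (\<Union>e\<in>{e\<in>E. s e = v}. RR e))
   \<and> (\<forall>e\<in>E. bij_betw (f e) (D (r e)) (RR e))"

definition is_endo :: "(('x \<Rightarrow> 'r::comm_ring_1) \<Rightarrow> ('x \<Rightarrow> 'r)) \<Rightarrow> bool" where
  "is_endo T \<longleftrightarrow> (\<forall>\<phi> \<psi>. T (\<lambda>x. \<phi> x + \<psi> x) = (\<lambda>x. T \<phi> x + T \<psi> x))
                \<and> (\<forall>c \<phi>. T (\<lambda>x. c * \<phi> x) = (\<lambda>x. c * T \<phi> x))"

text \<open>(Not necessarily unital) R-algebra homomorphism L_R(G) -> Hom_R(M), where the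
product in Hom_R(M) is composition.\<close>

definition LPA_hom :: "'v set \<Rightarrow> 'e set \<Rightarrow> ('e \<Rightarrow> 'v) \<Rightarrow> ('e \<Rightarrow> 'v set)
    \<Rightarrow> ((('v, 'e) ugen list \<Rightarrow> 'r::comm_ring_1) set \<Rightarrow> ('x \<Rightarrow> 'r) \<Rightarrow> ('x \<Rightarrow> 'r)) \<Rightarrow> bool" where
  "LPA_hom V E s r \<pi> \<longleftrightarrow>
     (\<forall>X\<in>LPA V E s r. is_endo (\<pi> X))
   \<and> (\<forall>X\<in>LPA V E s r. \<forall>Y\<in>LPA V E s r.
        \<pi> (LPA_add V E s r X Y) = (\<lambda>\<phi> x. \<pi> X \<phi> x + \<pi> Y \<phi> x))
   \<and> (\<forall>X\<in>LPA V E s r. \<forall>Y\<in>LPA V E s r.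
        \<pi> (LPA_mult V E s r X Y) = \<pi> X \<circ> \<pi> Y)
   \<and> (\<forall>c. \<forall>X\<in>LPA V E s r. \<pi> (LPA_smult V E s r c X) = (\<lambda>\<phi> x. c * \<pi> X \<phi> x))"

definition branching_rep_on_gens :: "'v set \<Rightarrow> 'e set \<Rightarrow> ('e \<Rightarrow> 'v) \<Rightarrow> ('e \<Rightarrow> 'v set)
    \<Rightarrow> ('e \<Rightarrow> 'x set) \<Rightarrow> ('v set \<Rightarrow> 'x set) \<Rightarrow> ('e \<Rightarrow> 'x \<Rightarrow> 'x)
    \<Rightarrow> ((('v, 'e) ugen list \<Rightarrow> 'r::comm_ring_1) set \<Rightarrow> ('x \<Rightarrow> 'r) \<Rightarrow> ('x \<Rightarrow> 'r)) \<Rightarrow> bool" where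
  "branching_rep_on_gens V E s r RR D f \<pi> \<longleftrightarrow>
     (\<forall>e\<in>E. \<forall>\<phi>. \<pi> (LPA_s V E s r e) \<phi> =
        (\<lambda>x. if x \<in> RR e then \<phi> (inv_into (D (r e)) (f e) x) else 0))
   \<and> (\<forall>e\<in>E. \<forall>\<phi>. \<pi> (LPA_sstar V E s r e) \<phi> =
        (\<lambda>x. if x \<in> D (r e) then \<phi> (f e x) else 0))
   \<and> (\<forall>A\<in>gzero V E r. \<forall>\<phi>. \<pi> (LPA_p V E s r A) \<phi> =
        (\<lambda>x. if x \<in> D A then \<phi> x else 0))"

end

theory Submission
  imports Defs
begin

(*
  Each generator acts on M = X -> R by the prescribed operator; composing these along words and
  extending linearly gives an action of the free algebra in which concatenation becomes
  composition. The branching-system axioms are exactly what is needed for every defining relation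
  of L_R(G) to act as zero (disjointness of the R_e for s_e^* s_f = 0, the partition
  D_v = U R_e for the vertex relation, bijectivity of f_e for s_e^* s_e = p_r(e)), so the ideal acts
  as zero and the action factors through the quotient. Uniqueness holds because every element of
  L_R(G) is an R-linear combination of classes of words, and the class of a word is a product of
  generators.
*)

section \<open>The free algebra and its quotient\<close>

definition fin_supp :: "('g list \<Rightarrow> 'r::comm_ring_1) \<Rightarrow> bool" where
  "fin_supp a \<longleftrightarrow> finite {w. a w \<noteq> 0}"

lemma fin_supp_zero: "fin_supp fa_zero"
  by (simp add: fin_supp_def fa_zero_def)

lemma fin_supp_gen: "fin_supp (fa_gen g)"
  unfolding fin_supp_def fa_gen_def by (rule finite_subset[of _ "{[g]}"]) auto

lemma fin_supp_add: "fin_supp a \<Longrightarrow> fin_supp b \<Longrightarrow> fin_supp (fa_add a b)"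
  unfolding fin_supp_def fa_add_def
  by (rule finite_subset[of _ "{w. a w \<noteq> 0} \<union> {w. b w \<noteq> 0}"]) auto

lemma fin_supp_smult: "fin_supp a \<Longrightarrow> fin_supp (fa_smult c a)"
  unfolding fin_supp_def fa_smult_def by (rule finite_subset[of _ "{w. a w \<noteq> 0}"]) auto

lemma fa_sub_eq_add_smult: "fa_sub a b = fa_add a (fa_smult (-1) b)"
  by (simp add: fa_sub_def fa_add_def fa_smult_def fun_eq_iff)

lemma fin_supp_sub: "fin_supp a \<Longrightarrow> fin_supp b \<Longrightarrow> fin_supp (fa_sub a b)"
  by (simp add: fa_sub_eq_add_smult fin_supp_add fin_supp_smult)

lemma fin_supp_sum:
  "finite S \<Longrightarrow> (\<And>i. i \<in> S \<Longrightarrow> fin_supp (a i)) \<Longrightarrow> fin_supp (\<lambda>w. \<Sum>i\<in>S. a i w)"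
proof (induction S rule: finite_induct)
  case empty
  then show ?case using fin_supp_zero by (simp add: fa_zero_def)
next
  case (insert i S)
  then have "fin_supp (fa_add (a i) (\<lambda>w. \<Sum>i\<in>S. a i w))" by (simp add: fin_supp_add)
  moreover have "(\<lambda>w. \<Sum>i\<in>insert i S. a i w) = fa_add (a i) (\<lambda>w. \<Sum>i\<in>S. a i w)"
    using insert.hyps by (simp add: fa_add_def)
  ultimately show ?case by simp
qed

lemma fa_mult_nonzeroE:
  assumes "fa_mult a b w \<noteq> 0"
  obtains i where "i \<in> {1..<length w}" "a (take i w) \<noteq> 0" "b (drop i w) \<noteq> 0"
proof -
  obtain i where i: "i \<in> {1..<length w}" "a (take i w) * b (drop i w) \<noteq> 0"
    using assms unfolding fa_mult_def by (meson sum.neutral)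
  show ?thesis by (rule that[OF i(1)]) (use i(2) in auto)
qed

lemma fa_mult_supp_subset:
  "{w. fa_mult a b w \<noteq> 0} \<subseteq> (\<lambda>(u, v). u @ v) ` ({w. a w \<noteq> 0} \<times> {w. b w \<noteq> 0})"
proof
  fix w assume "w \<in> {w. fa_mult a b w \<noteq> 0}"
  then obtain i where "a (take i w) \<noteq> 0" "b (drop i w) \<noteq> 0" by (auto elim: fa_mult_nonzeroE)
  then show "w \<in> (\<lambda>(u, v). u @ v) ` ({w. a w \<noteq> 0} \<times> {w. b w \<noteq> 0})"
    by (intro image_eqI[of _ _ "(take i w, drop i w)"]) auto
qed

lemma fin_supp_mult: "fin_supp a \<Longrightarrow> fin_supp b \<Longrightarrow> fin_supp (fa_mult a b)"
  unfolding fin_supp_def by (rule finite_subset[OF fa_mult_supp_subset]) simp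

lemma fa_mult_eq_split_sum:
  assumes "finite A" "finite B" "{w. a w \<noteq> 0} \<subseteq> A" "{w. b w \<noteq> 0} \<subseteq> B"
  shows "fa_mult a b w =
    (\<Sum>p\<in>{(u, v) \<in> A \<times> B. u \<noteq> [] \<and> v \<noteq> [] \<and> u @ v = w}. a (fst p) * b (snd p))"
proof -
  define split where "split = (\<lambda>i. (take i w, drop i w))"
  define S where "S = {(u, v). u \<noteq> [] \<and> v \<noteq> [] \<and> u @ v = w}"
  have inj: "inj_on split {1..<length w}"
    by (rule inj_onI) (metis split_def length_take min.absorb4 atLeastLessThan_iff prod.inject)
  have image: "split ` {1..<length w} = S"
  proof (intro equalityI subsetI)
    fix p assume "p \<in> S"
    then obtain u v where "p = (u, v)" "u \<noteq> []" "v \<noteq> []" "u @ v = w" by (auto simp: S_def)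
    then show "p \<in> split ` {1..<length w}"
      by (intro image_eqI[of _ _ "length u"]) (auto simp: split_def Suc_le_eq)
  qed (auto simp: split_def S_def)
  have "fa_mult a b w = (\<Sum>p\<in>split ` {1..<length w}. a (fst p) * b (snd p))"
    unfolding fa_mult_def sum.reindex[OF inj] by (simp add: split_def)
  also have "\<dots> = (\<Sum>p\<in>S \<inter> (A \<times> B). a (fst p) * b (snd p))"
    unfolding image
  proof (rule sum.mono_neutral_right)
    show "finite S" unfolding image[symmetric] by simp
    show "S \<inter> (A \<times> B) \<subseteq> S" by blast
    show "\<forall>p\<in>S - S \<inter> (A \<times> B). a (fst p) * b (snd p) = 0"
    proof
      fix p assume "p \<in> S - S \<inter> (A \<times> B)"
      then have "fst p \<notin> A \<or> snd p \<notin> B" by (cases p) auto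
      then have "a (fst p) = 0 \<or> b (snd p) = 0" using assms(3,4) by blast
      then show "a (fst p) * b (snd p) = 0" by auto
    qed
  qed
  also have "S \<inter> (A \<times> B) = {(u, v) \<in> A \<times> B. u \<noteq> [] \<and> v \<noteq> [] \<and> u @ v = w}"
    by (auto simp: S_def)
  finally show ?thesis .
qed

lemma lp_free_fin_supp: "a \<in> lp_free V E r \<Longrightarrow> fin_supp a"
  by (simp add: lp_free_def fin_supp_def)

lemma lp_free_supp_mono:
  assumes "\<And>w. c w \<noteq> 0 \<Longrightarrow> a w \<noteq> 0 \<or> b w \<noteq> 0" "a \<in> lp_free V E r" "b \<in> lp_free V E r"
  shows "c \<in> lp_free V E r"
proof -
  have "{w. c w \<noteq> 0} \<subseteq> {w. a w \<noteq> 0} \<union> {w. b w \<noteq> 0}" using assms(1) by auto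
  then show ?thesis using assms by (auto simp: lp_free_def intro: finite_subset)
qed

lemma lp_free_add: "a \<in> lp_free V E r \<Longrightarrow> b \<in> lp_free V E r \<Longrightarrow> fa_add a b \<in> lp_free V E r"
  by (rule lp_free_supp_mono[of _ a b]) (auto simp: fa_add_def)

lemma lp_free_smult: "a \<in> lp_free V E r \<Longrightarrow> fa_smult c a \<in> lp_free V E r"
  by (rule lp_free_supp_mono[of _ a a]) (auto simp: fa_smult_def)

lemma lp_free_fun_upd_zero: "a \<in> lp_free V E r \<Longrightarrow> a(w := 0) \<in> lp_free V E r"
  by (rule lp_free_supp_mono[of _ a a]) (auto split: if_splits)

lemma lp_free_zero: "fa_zero \<in> lp_free V E r"
  by (simp add: lp_free_def fa_zero_def)

lemma lp_free_gen: "valid_gen V E r g \<Longrightarrow> fa_gen g \<in> lp_free V E r"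
  unfolding lp_free_def fa_gen_def by auto

lemma lp_free_mult:
  assumes a: "a \<in> lp_free V E r" and b: "b \<in> lp_free V E r"
  shows "fa_mult a b \<in> lp_free V E r"
proof -
  have "\<forall>g\<in>set w. valid_gen V E r g" if nonzero: "fa_mult a b w \<noteq> 0" for w
  proof -
    obtain i where "i \<in> {1..<length w}" "a (take i w) \<noteq> 0" "b (drop i w) \<noteq> 0"
      using nonzero by (rule fa_mult_nonzeroE)
    then have "\<forall>g\<in>set (take i w) \<union> set (drop i w). valid_gen V E r g"
      using a b by (auto simp: lp_free_def)
    then show ?thesis by (metis append_take_drop_id set_append)
  qed
  moreover have "fin_supp (fa_mult a b)" using a b by (intro fin_supp_mult lp_free_fin_supp)
  ultimately show ?thesis by (simp add: lp_free_def fin_supp_def fa_mult_def)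
qed

definition fa_word :: "'g list \<Rightarrow> 'g list \<Rightarrow> 'r::comm_ring_1" where
  "fa_word w = (\<lambda>u. if u = w then 1 else 0)"

lemma fa_word_single: "fa_word [g] = fa_gen g"
  by (simp add: fa_word_def fa_gen_def)

lemma fa_word_Cons:
  assumes "v \<noteq> []"
  shows "fa_word (g # v) = fa_mult (fa_gen g) (fa_word v)"
proof (intro ext)
  fix u
  let ?S = "{(x, y) \<in> {[g]} \<times> {v}. x \<noteq> [] \<and> y \<noteq> [] \<and> x @ y = u}"
  have S: "?S = (if u = g # v then {([g], v)} else {})" using assms by auto
  have "fa_mult (fa_gen g) (fa_word v) u = (\<Sum>p\<in>?S. fa_gen g (fst p) * fa_word v (snd p))"
    by (rule fa_mult_eq_split_sum) (auto simp: fa_gen_def fa_word_def)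
  also have "\<dots> = fa_word (g # v) u"
    unfolding S by (simp add: fa_gen_def fa_word_def)
  finally show "fa_word (g # v) u = fa_mult (fa_gen g) (fa_word v) u" by (rule sym)
qed

lemma lp_free_word: "w \<noteq> [] \<Longrightarrow> \<forall>g\<in>set w. valid_gen V E r g \<Longrightarrow> fa_word w \<in> lp_free V E r"
  by (auto simp: lp_free_def fa_word_def)

lemma fa_decompose: "a = fa_add (a(w := 0)) (fa_smult (a w) (fa_word w))"
  by (simp add: fa_add_def fa_smult_def fa_word_def fun_eq_iff)

lemma fin_supp_rel: "a \<in> lp_rels V E s r \<Longrightarrow> fin_supp a"
  unfolding lp_rels_def
  by (auto simp: fin_supp_gen fin_supp_mult fin_supp_add fin_supp_sub fin_supp_sum fin_supp_zero)

lemma fin_supp_ideal: "a \<in> lp_ideal V E s r \<Longrightarrow> fin_supp a"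
  by (induction rule: lp_ideal.induct)
    (auto simp: fin_supp_rel fin_supp_zero fin_supp_add fin_supp_smult fin_supp_mult lp_free_fin_supp)

lemma lp_class_eq:
  assumes ab: "fa_sub a b \<in> lp_ideal V E s r"
  shows "lp_class V E s r a = lp_class V E s r b"
proof (intro set_eqI iffI)
  fix c assume "c \<in> lp_class V E s r a"
  then have c: "c \<in> lp_free V E r" "fa_sub a c \<in> lp_ideal V E s r" by (simp_all add: lp_class_def)
  have "fa_sub b c = fa_add (fa_smult (-1) (fa_sub a b)) (fa_sub a c)"
    by (simp add: fa_sub_def fa_add_def fa_smult_def fun_eq_iff)
  also have "\<dots> \<in> lp_ideal V E s r" by (intro li_add li_smult ab c)
  finally show "c \<in> lp_class V E s r b" using c by (simp add: lp_class_def)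
next
  fix c assume "c \<in> lp_class V E s r b"
  then have c: "c \<in> lp_free V E r" "fa_sub b c \<in> lp_ideal V E s r" by (simp_all add: lp_class_def)
  have "fa_sub a c = fa_add (fa_sub a b) (fa_sub b c)"
    by (simp add: fa_sub_def fa_add_def fun_eq_iff)
  also have "\<dots> \<in> lp_ideal V E s r" by (intro li_add ab c)
  finally show "c \<in> lp_class V E s r a" using c by (simp add: lp_class_def)
qed

lemma lp_rep_class:
  assumes "a \<in> lp_free V E r"
  shows "lp_rep (lp_class V E s r a) \<in> lp_free V E r"
    and "fa_sub a (lp_rep (lp_class V E s r a)) \<in> lp_ideal V E s r"
proof -
  have "fa_sub a a = fa_zero" by (simp add: fa_sub_def fa_zero_def fun_eq_iff)
  then have "a \<in> lp_class V E s r a" using assms by (simp add: lp_class_def li_zero)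
  then have "lp_rep (lp_class V E s r a) \<in> lp_class V E s r a"
    unfolding lp_rep_def by (rule someI[where P = "\<lambda>b. b \<in> lp_class V E s r a"])
  then show "lp_rep (lp_class V E s r a) \<in> lp_free V E r"
    and "fa_sub a (lp_rep (lp_class V E s r a)) \<in> lp_ideal V E s r"
    by (simp_all add: lp_class_def)
qed

lemma LPA_add_class:
  assumes "a \<in> lp_free V E r" "b \<in> lp_free V E r"
  shows "LPA_add V E s r (lp_class V E s r a) (lp_class V E s r b) = lp_class V E s r (fa_add a b)"
proof -
  let ?a = "lp_rep (lp_class V E s r a)" and ?b = "lp_rep (lp_class V E s r b)"
  have "fa_sub (fa_add a b) (fa_add ?a ?b) = fa_add (fa_sub a ?a) (fa_sub b ?b)"
    by (simp add: fa_sub_def fa_add_def fun_eq_iff)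
  also have "\<dots> \<in> lp_ideal V E s r" by (intro li_add lp_rep_class(2) assms)
  finally show ?thesis unfolding LPA_add_def by (rule lp_class_eq[symmetric])
qed

lemma LPA_smult_class:
  assumes "a \<in> lp_free V E r"
  shows "LPA_smult V E s r c (lp_class V E s r a) = lp_class V E s r (fa_smult c a)"
proof -
  let ?a = "lp_rep (lp_class V E s r a)"
  have "fa_sub (fa_smult c a) (fa_smult c ?a) = fa_smult c (fa_sub a ?a)"
    by (simp add: fa_sub_def fa_smult_def fun_eq_iff algebra_simps)
  also have "\<dots> \<in> lp_ideal V E s r" by (intro li_smult lp_rep_class(2) assms)
  finally show ?thesis unfolding LPA_smult_def by (rule lp_class_eq[symmetric])
qed

lemma LPA_mult_class:
  assumes "a \<in> lp_free V E r" "b \<in> lp_free V E r"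
  shows "LPA_mult V E s r (lp_class V E s r a) (lp_class V E s r b) = lp_class V E s r (fa_mult a b)"
proof -
  let ?a = "lp_rep (lp_class V E s r a)" and ?b = "lp_rep (lp_class V E s r b)"
  have "fa_sub (fa_mult a b) (fa_mult ?a ?b) = fa_add (fa_mult (fa_sub a ?a) b) (fa_mult ?a (fa_sub b ?b))"
    by (simp add: fa_sub_def fa_add_def fa_mult_def fun_eq_iff algebra_simps sum.distrib sum_subtractf)
  also have "\<dots> \<in> lp_ideal V E s r"
    by (intro li_add li_rmult li_lmult lp_rep_class assms)
  finally show ?thesis unfolding LPA_mult_def by (rule lp_class_eq[symmetric])
qed

lemma LPA_hom_class:
  assumes "LPA_hom V E s r \<pi>" "a \<in> lp_free V E r" "b \<in> lp_free V E r"
  shows "\<pi> (lp_class V E s r (fa_add a b)) = (\<lambda>\<phi> x. \<pi> (lp_class V E s r a) \<phi> x + \<pi> (lp_class V E s r b) \<phi> x)"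
    and "\<pi> (lp_class V E s r (fa_mult a b)) = \<pi> (lp_class V E s r a) \<circ> \<pi> (lp_class V E s r b)"
    and "\<pi> (lp_class V E s r (fa_smult c a)) = (\<lambda>\<phi> x. c * \<pi> (lp_class V E s r a) \<phi> x)"
  using assms
  by (simp_all add: LPA_hom_def LPA_def flip: LPA_add_class LPA_mult_class LPA_smult_class)

lemma LPA_hom_class_zero:
  assumes "LPA_hom V E s r \<pi>"
  shows "\<pi> (lp_class V E s r fa_zero) = (\<lambda>\<phi> x. 0)"
proof -
  have "\<pi> (lp_class V E s r fa_zero) = \<pi> (lp_class V E s r (fa_smult 0 fa_zero))"
    by (simp add: fa_smult_def fa_zero_def)
  also have "\<dots> = (\<lambda>\<phi> x. 0)"
    using LPA_hom_class(3)[OF assms lp_free_zero lp_free_zero, of 0] by simp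
  finally show ?thesis .
qed

section \<open>The action on functions X -> R\<close>

lemma is_endo_add: "is_endo T \<Longrightarrow> T (\<lambda>x. \<phi> x + \<psi> x) x = T \<phi> x + T \<psi> x"
  unfolding is_endo_def by metis

lemma is_endo_smult: "is_endo T \<Longrightarrow> T (\<lambda>x. c * \<phi> x) x = c * T \<phi> x"
  unfolding is_endo_def by metis

lemma is_endo_zero: "is_endo T \<Longrightarrow> T (\<lambda>x. 0) = (\<lambda>x. 0)"
  using is_endo_smult[of T 0 "\<lambda>x. 0"] by auto

lemma is_endo_sum:
  assumes T: "is_endo T" and B: "finite B"
  shows "T (\<lambda>y. \<Sum>v\<in>B. F v y) x = (\<Sum>v\<in>B. T (F v) x)"
  using B
proof (induction B arbitrary: x rule: finite_induct)
  case empty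
  then show ?case using is_endo_zero[OF T] by simp
next
  case (insert v B)
  then show ?case
    using is_endo_add[OF T, of "F v" "\<lambda>y. \<Sum>v\<in>B. F v y" x] by simp
qed

lemma is_endo_comp: "is_endo S \<Longrightarrow> is_endo T \<Longrightarrow> is_endo (S \<circ> T)"
  unfolding is_endo_def by simp

context
  fixes r :: "'e \<Rightarrow> 'v set" and RR :: "'e \<Rightarrow> 'x set" and D :: "'v set \<Rightarrow> 'x set"
    and f :: "'e \<Rightarrow> 'x \<Rightarrow> 'x"
begin

definition gen_op :: "('v, 'e) ugen \<Rightarrow> ('x \<Rightarrow> 'r::comm_ring_1) \<Rightarrow> 'x \<Rightarrow> 'r" where
  "gen_op g \<phi> = (case g of
      GS e \<Rightarrow> (\<lambda>x. if x \<in> RR e then \<phi> (inv_into (D (r e)) (f e) x) else 0)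
    | GSstar e \<Rightarrow> (\<lambda>x. if x \<in> D (r e) then \<phi> (f e x) else 0)
    | GP A \<Rightarrow> (\<lambda>x. if x \<in> D A then \<phi> x else 0))"

lemma gen_op_simps:
  "gen_op (GS e) \<phi> = (\<lambda>x. if x \<in> RR e then \<phi> (inv_into (D (r e)) (f e) x) else 0)"
  "gen_op (GSstar e) \<phi> = (\<lambda>x. if x \<in> D (r e) then \<phi> (f e x) else 0)"
  "gen_op (GP A) \<phi> = (\<lambda>x. if x \<in> D A then \<phi> x else 0)"
  by (simp_all add: gen_op_def)

text \<open>The empty word acts as zero; it never carries a coefficient in the free algebra.\<close>

fun word_op :: "('v, 'e) ugen list \<Rightarrow> ('x \<Rightarrow> 'r::comm_ring_1) \<Rightarrow> 'x \<Rightarrow> 'r" where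
  "word_op [] = (\<lambda>\<phi> x. 0)"
| "word_op [g] = gen_op g"
| "word_op (g # h # w) = gen_op g \<circ> word_op (h # w)"

lemma is_endo_gen_op: "is_endo (gen_op g)"
  unfolding is_endo_def gen_op_def by (cases g) (auto simp: fun_eq_iff ring_distribs)

lemma is_endo_word_op: "is_endo (word_op w)"
proof (induction w rule: word_op.induct)
  case 1
  then show ?case by (simp add: is_endo_def)
next
  case (2 g)
  then show ?case by (simp add: is_endo_gen_op)
next
  case (3 g h w)
  then show ?case by (simp only: word_op.simps) (rule is_endo_comp[OF is_endo_gen_op])
qed

lemma word_op_append: "u \<noteq> [] \<Longrightarrow> v \<noteq> [] \<Longrightarrow> word_op (u @ v) = word_op u \<circ> word_op v"
proof (induction u rule: word_op.induct)
  case (2 g)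
  then show ?case by (cases v) auto
next
  case (3 g h w)
  then show ?case by (simp add: comp_assoc)
qed simp

lemma word_op_compose:
  "word_op u (word_op v \<phi>) = (if u = [] \<or> v = [] then (\<lambda>x. 0) else word_op (u @ v) \<phi>)"
proof (cases "u = [] \<or> v = []")
  case True
  then show ?thesis using is_endo_zero[OF is_endo_word_op, of u] by auto
next
  case False
  then show ?thesis by (simp add: word_op_append)
qed

definition free_rep :: "(('v, 'e) ugen list \<Rightarrow> 'r::comm_ring_1) \<Rightarrow> ('x \<Rightarrow> 'r) \<Rightarrow> 'x \<Rightarrow> 'r" where
  "free_rep a \<phi> = (\<lambda>x. \<Sum>w\<in>{w. a w \<noteq> 0}. a w * word_op w \<phi> x)"

lemma free_rep_eq_sum:
  "finite W \<Longrightarrow> {w. a w \<noteq> 0} \<subseteq> W \<Longrightarrow> free_rep a \<phi> x = (\<Sum>w\<in>W. a w * word_op w \<phi> x)"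
  unfolding free_rep_def by (rule sum.mono_neutral_left) auto

lemma is_endo_free_rep: "is_endo (free_rep a)"
  unfolding is_endo_def free_rep_def
  by (auto simp: fun_eq_iff is_endo_add[OF is_endo_word_op] is_endo_smult[OF is_endo_word_op]
      sum.distrib ring_distribs sum_distrib_left mult.left_commute)

lemma free_rep_zero: "free_rep fa_zero = (\<lambda>\<phi> x. 0)"
  by (simp add: free_rep_def fa_zero_def fun_eq_iff)

lemma free_rep_gen: "free_rep (fa_gen g) = gen_op g"
proof (intro ext)
  fix \<phi> x
  show "free_rep (fa_gen g) \<phi> x = gen_op g \<phi> x"
    using free_rep_eq_sum[of "{[g]}" "fa_gen g" \<phi> x] by (auto simp: fa_gen_def)
qed

lemma free_rep_add:
  assumes "fin_supp a" "fin_supp b"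
  shows "free_rep (fa_add a b) \<phi> x = free_rep a \<phi> x + free_rep b \<phi> x"
proof -
  let ?W = "{w. a w \<noteq> 0} \<union> {w. b w \<noteq> 0}"
  have W: "finite ?W" using assms by (simp add: fin_supp_def)
  have "free_rep (fa_add a b) \<phi> x = (\<Sum>w\<in>?W. fa_add a b w * word_op w \<phi> x)"
    by (rule free_rep_eq_sum[OF W]) (auto simp: fa_add_def)
  also have "\<dots> = (\<Sum>w\<in>?W. a w * word_op w \<phi> x) + (\<Sum>w\<in>?W. b w * word_op w \<phi> x)"
    by (simp add: fa_add_def ring_distribs sum.distrib)
  finally show ?thesis using free_rep_eq_sum[OF W, of a] free_rep_eq_sum[OF W, of b] by auto
qed

lemma free_rep_smult:
  assumes "fin_supp a"
  shows "free_rep (fa_smult c a) \<phi> x = c * free_rep a \<phi> x"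
proof -
  have W: "finite {w. a w \<noteq> 0}" using assms by (simp add: fin_supp_def)
  have "free_rep (fa_smult c a) \<phi> x = (\<Sum>w\<in>{w. a w \<noteq> 0}. fa_smult c a w * word_op w \<phi> x)"
    by (rule free_rep_eq_sum[OF W]) (auto simp: fa_smult_def)
  then show ?thesis by (simp add: free_rep_def fa_smult_def sum_distrib_left mult.assoc)
qed

lemma free_rep_sub:
  "fin_supp a \<Longrightarrow> fin_supp b \<Longrightarrow> free_rep (fa_sub a b) \<phi> x = free_rep a \<phi> x - free_rep b \<phi> x"
  by (simp add: fa_sub_eq_add_smult free_rep_add free_rep_smult fin_supp_smult)

lemma free_rep_sum:
  "finite S \<Longrightarrow> (\<And>i. i \<in> S \<Longrightarrow> fin_supp (a i)) \<Longrightarrow>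
    free_rep (\<lambda>w. \<Sum>i\<in>S. a i w) \<phi> x = (\<Sum>i\<in>S. free_rep (a i) \<phi> x)"
proof (induction S rule: finite_induct)
  case empty
  then show ?case by (simp add: free_rep_def)
next
  case (insert i S)
  have "(\<lambda>w. \<Sum>i\<in>insert i S. a i w) = fa_add (a i) (\<lambda>w. \<Sum>i\<in>S. a i w)"
    using insert.hyps by (simp add: fa_add_def)
  moreover have "fin_supp (\<lambda>w. \<Sum>i\<in>S. a i w)"
    using insert by (intro fin_supp_sum) auto
  ultimately show ?case using insert by (simp add: free_rep_add)
qed

lemma free_rep_mult:
  assumes "fin_supp a" "fin_supp b"
  shows "free_rep (fa_mult a b) = free_rep a \<circ> free_rep b"
proof (intro ext)
  fix \<phi> x
  define A where "A = {w. a w \<noteq> 0}"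
  define B where "B = {w. b w \<noteq> 0}"
  have fin: "finite A" "finite B" using assms by (auto simp: fin_supp_def A_def B_def)
  let ?cat = "\<lambda>(u, v). u @ v"
  let ?P = "{(u, v) \<in> A \<times> B. u \<noteq> [] \<and> v \<noteq> []}"
  let ?F = "\<lambda>p. a (fst p) * b (snd p) * word_op (?cat p) \<phi> x"
  have "free_rep (fa_mult a b) \<phi> x = (\<Sum>w\<in>?cat ` (A \<times> B). fa_mult a b w * word_op w \<phi> x)"
    using fin fa_mult_supp_subset[of a b] by (intro free_rep_eq_sum) (auto simp: A_def B_def)
  also have "\<dots> = (\<Sum>w\<in>?cat ` (A \<times> B). \<Sum>p\<in>{p \<in> ?P. ?cat p = w}. ?F p)"
  proof (rule sum.cong[OF refl])
    fix w
    have "{p \<in> ?P. ?cat p = w} = {(u, v) \<in> A \<times> B. u \<noteq> [] \<and> v \<noteq> [] \<and> u @ v = w}" by auto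
    then have "fa_mult a b w * word_op w \<phi> x
        = (\<Sum>p\<in>{p \<in> ?P. ?cat p = w}. a (fst p) * b (snd p) * word_op w \<phi> x)"
      using fa_mult_eq_split_sum[OF fin, of a b w] by (simp add: A_def B_def sum_distrib_right)
    also have "\<dots> = (\<Sum>p\<in>{p \<in> ?P. ?cat p = w}. ?F p)"
      by (rule sum.cong) auto
    finally show "fa_mult a b w * word_op w \<phi> x = (\<Sum>p\<in>{p \<in> ?P. ?cat p = w}. ?F p)" .
  qed
  also have "\<dots> = (\<Sum>p\<in>?P. ?F p)"
  proof (rule sum.group)
    show "finite ?P" by (rule finite_subset[of _ "A \<times> B"]) (use fin in auto)
  qed (use fin in auto)
  also have "\<dots> = (\<Sum>(u, v)\<in>A \<times> B. a u * b v * word_op u (word_op v \<phi>) x)"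
    using fin by (intro sum.mono_neutral_cong_left) (auto simp: word_op_compose)
  also have "\<dots> = (\<Sum>u\<in>A. a u * word_op u (free_rep b \<phi>) x)"
    unfolding sum.cartesian_product[symmetric] free_rep_def B_def[symmetric]
    by (simp add: is_endo_sum[OF is_endo_word_op fin(2)] is_endo_smult[OF is_endo_word_op]
        sum_distrib_left mult.assoc)
  also have "\<dots> = (free_rep a \<circ> free_rep b) \<phi> x"
    by (simp add: free_rep_def A_def)
  finally show "free_rep (fa_mult a b) \<phi> x = (free_rep a \<circ> free_rep b) \<phi> x" .
qed

end

lemma free_rep_word: "free_rep r RR D f (fa_word w) = word_op r RR D f w"
proof (intro ext)
  fix \<phi> x
  show "free_rep r RR D f (fa_word w) \<phi> x = word_op r RR D f w \<phi> x"
    using free_rep_eq_sum[of "{w}" "fa_word w" r RR D f \<phi> x] by (auto simp: fa_word_def)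
qed

lemma branching_rep_on_gens_iff:
  "branching_rep_on_gens V E s r RR D f \<pi> \<longleftrightarrow>
    (\<forall>g. valid_gen V E r g \<longrightarrow> \<pi> (lp_class V E s r (fa_gen g)) = gen_op r RR D f g)"
  unfolding branching_rep_on_gens_def LPA_s_def LPA_sstar_def LPA_p_def
  by (auto simp: valid_gen_def gen_op_simps fun_eq_iff split: ugen.split)

lemma LPA_hom_class_word:
  assumes hom: "LPA_hom V E s r \<pi>"
    and gens: "\<And>g. valid_gen V E r g \<Longrightarrow> \<pi> (lp_class V E s r (fa_gen g)) = gen_op r RR D f g"
  shows "w \<noteq> [] \<Longrightarrow> \<forall>g\<in>set w. valid_gen V E r g \<Longrightarrow>
    \<pi> (lp_class V E s r (fa_word w)) = word_op r RR D f w"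
proof (induction w rule: word_op.induct)
  case (2 g)
  then show ?case by (simp add: fa_word_single gens)
next
  case (3 g h w)
  then show ?case
    by (simp add: fa_word_Cons LPA_hom_class(2)[OF hom] lp_free_gen lp_free_word gens)
qed simp

lemma LPA_hom_class_fun_upd:
  fixes a :: "('v, 'e) ugen list \<Rightarrow> 'r::comm_ring_1"
  assumes hom: "LPA_hom V E s r \<pi>"
    and gens: "\<And>g. valid_gen V E r g \<Longrightarrow> \<pi> (lp_class V E s r (fa_gen g)) = gen_op r RR D f g"
    and a: "a \<in> lp_free V E r"
    and IH: "\<pi> (lp_class V E s r (a(w := 0))) = free_rep r RR D f (a(w := 0))"
  shows "\<pi> (lp_class V E s r a) = free_rep r RR D f a"
proof (cases "a w = 0")
  case True
  then show ?thesis using IH by (simp add: fun_upd_idem)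
next
  case False
  let ?a' = "a(w := 0)"
  have a': "?a' \<in> lp_free V E r" using a by (rule lp_free_fun_upd_zero)
  have w: "w \<noteq> []" "\<forall>g\<in>set w. valid_gen V E r g" using a False by (auto simp: lp_free_def)
  then have fw: "(fa_word w :: _ \<Rightarrow> 'r) \<in> lp_free V E r" by (rule lp_free_word)
  have "\<pi> (lp_class V E s r a) = \<pi> (lp_class V E s r (fa_add ?a' (fa_smult (a w) (fa_word w))))"
    by (subst fa_decompose[of a w]) simp
  also have "\<dots> = (\<lambda>\<phi> x. \<pi> (lp_class V E s r ?a') \<phi> x + a w * \<pi> (lp_class V E s r (fa_word w)) \<phi> x)"
    using LPA_hom_class(1)[OF hom a' lp_free_smult[OF fw]] LPA_hom_class(3)[OF hom fw fw] by simp
  also have "\<dots> = (\<lambda>\<phi> x. free_rep r RR D f ?a' \<phi> x + a w * word_op r RR D f w \<phi> x)"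
    using IH LPA_hom_class_word[OF hom gens w] by simp
  also have "\<dots> = free_rep r RR D f (fa_add ?a' (fa_smult (a w) (fa_word w)))"
    using lp_free_fin_supp[OF a'] lp_free_fin_supp[OF fw]
    by (simp add: free_rep_add free_rep_smult free_rep_word fin_supp_smult fun_eq_iff)
  also have "\<dots> = free_rep r RR D f a" by (simp flip: fa_decompose)
  finally show ?thesis .
qed

lemma LPA_hom_class_eq_free_rep:
  fixes a :: "('v, 'e) ugen list \<Rightarrow> 'r::comm_ring_1"
  assumes hom: "LPA_hom V E s r \<pi>"
    and gens: "\<And>g. valid_gen V E r g \<Longrightarrow> \<pi> (lp_class V E s r (fa_gen g)) = gen_op r RR D f g"
    and a: "a \<in> lp_free V E r"
  shows "\<pi> (lp_class V E s r a) = free_rep r RR D f a"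
proof -
  have "finite W \<Longrightarrow> {w. a w \<noteq> 0} \<subseteq> W \<Longrightarrow> a \<in> lp_free V E r \<Longrightarrow>
      \<pi> (lp_class V E s r a) = free_rep r RR D f a" for W
  proof (induction W arbitrary: a rule: finite_induct)
    case empty
    then have "a = fa_zero" by (auto simp: fa_zero_def)
    then show ?case using LPA_hom_class_zero[OF hom] by (simp add: free_rep_zero)
  next
    case (insert w W)
    have "{v. (a(w := 0)) v \<noteq> 0} \<subseteq> W" using insert.prems(1) by auto
    then have "\<pi> (lp_class V E s r (a(w := 0))) = free_rep r RR D f (a(w := 0))"
      using lp_free_fun_upd_zero[OF insert.prems(2)] by (rule insert.IH)
    from LPA_hom_class_fun_upd[OF hom gens insert.prems(2) this] show ?case .
  qed
  then show ?thesis using a by (auto simp: lp_free_def)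
qed

section \<open>Branching systems realise the relations\<close>

definition LPA_rep :: "('e \<Rightarrow> 'v set) \<Rightarrow> ('e \<Rightarrow> 'x set) \<Rightarrow> ('v set \<Rightarrow> 'x set) \<Rightarrow> ('e \<Rightarrow> 'x \<Rightarrow> 'x)
    \<Rightarrow> (('v, 'e) ugen list \<Rightarrow> 'r::comm_ring_1) set \<Rightarrow> ('x \<Rightarrow> 'r) \<Rightarrow> 'x \<Rightarrow> 'r" where
  "LPA_rep r RR D f X = free_rep r RR D f (lp_rep X)"

context
  fixes V :: "'v set" and E :: "'e set" and s :: "'e \<Rightarrow> 'v" and r :: "'e \<Rightarrow> 'v set"
    and RR :: "'e \<Rightarrow> 'x set" and D :: "'v set \<Rightarrow> 'x set" and f :: "'e \<Rightarrow> 'x \<Rightarrow> 'x"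
  assumes bs: "branching_system V E s r RR D f"
begin

lemma branching_D_empty: "D {} = {}"
  using bs by (simp add: branching_system_def)

lemma branching_D_inter: "A \<in> gzero V E r \<Longrightarrow> B \<in> gzero V E r \<Longrightarrow> D A \<inter> D B = D (A \<inter> B)"
  using bs by (simp add: branching_system_def)

lemma branching_D_union: "A \<in> gzero V E r \<Longrightarrow> B \<in> gzero V E r \<Longrightarrow> D A \<union> D B = D (A \<union> B)"
  using bs by (simp add: branching_system_def)

lemma branching_range_subset_source: "e \<in> E \<Longrightarrow> RR e \<subseteq> D {s e}"
  using bs by (simp add: branching_system_def)

lemma branching_ranges_disjoint: "e \<in> E \<Longrightarrow> e' \<in> E \<Longrightarrow> e \<noteq> e' \<Longrightarrow> RR e \<inter> RR e' = {}"
  using bs by (simp add: branching_system_def)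

lemma branching_D_vertex:
  "v \<in> V \<Longrightarrow> finite {e\<in>E. s e = v} \<Longrightarrow> {e\<in>E. s e = v} \<noteq> {} \<Longrightarrow>
    D {v} = (\<Union>e\<in>{e\<in>E. s e = v}. RR e)"
  using bs by (simp add: branching_system_def)

lemma branching_bij: "e \<in> E \<Longrightarrow> bij_betw (f e) (D (r e)) (RR e)"
  using bs by (simp add: branching_system_def)

lemma branching_bij_inv:
  assumes "e \<in> E" "y \<in> RR e"
  shows "inv_into (D (r e)) (f e) y \<in> D (r e)" "f e (inv_into (D (r e)) (f e) y) = y"
  using branching_bij[OF assms(1)] assms(2)
  by (auto simp: bij_betw_def intro: inv_into_into f_inv_into_f)

lemma branching_bij_f:
  assumes "e \<in> E" "y \<in> D (r e)"
  shows "f e y \<in> RR e" "inv_into (D (r e)) (f e) (f e y) = y"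
  using branching_bij[OF assms(1)] assms(2) by (auto simp: bij_betw_def)

abbreviation act :: "('v, 'e) ugen \<Rightarrow> ('x \<Rightarrow> 'r::comm_ring_1) \<Rightarrow> 'x \<Rightarrow> 'r" where
  "act \<equiv> gen_op r RR D f"

lemma gen_op_empty: "act (GP {}) = (\<lambda>\<phi> x. 0)"
  by (simp add: gen_op_simps branching_D_empty fun_eq_iff)

lemma gen_op_GP_GP:
  "A \<in> gzero V E r \<Longrightarrow> B \<in> gzero V E r \<Longrightarrow> act (GP A) (act (GP B) \<phi>) = act (GP (A \<inter> B)) \<phi>"
  by (auto simp: gen_op_simps fun_eq_iff simp flip: branching_D_inter)

lemma gen_op_GP_union:
  assumes "A \<in> gzero V E r" "B \<in> gzero V E r"
  shows "act (GP (A \<union> B)) \<phi> x = act (GP A) \<phi> x + act (GP B) \<phi> x - act (GP (A \<inter> B)) \<phi> x"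
  using branching_D_inter[OF assms] branching_D_union[OF assms] by (auto simp: gen_op_simps)

lemma gen_op_source_GS: "e \<in> E \<Longrightarrow> act (GP {s e}) (act (GS e) \<phi>) = act (GS e) \<phi>"
  using branching_range_subset_source[of e] by (auto simp: gen_op_simps fun_eq_iff)

lemma gen_op_GS_range: "e \<in> E \<Longrightarrow> act (GS e) (act (GP (r e)) \<phi>) = act (GS e) \<phi>"
  using branching_bij_inv[of e] by (auto simp: gen_op_simps fun_eq_iff)

lemma gen_op_range_GSstar: "act (GP (r e)) (act (GSstar e) \<phi>) = act (GSstar e) \<phi>"
  by (auto simp: gen_op_simps fun_eq_iff)

lemma gen_op_GSstar_source: "e \<in> E \<Longrightarrow> act (GSstar e) (act (GP {s e}) \<phi>) = act (GSstar e) \<phi>"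
  using branching_bij_f[of e] branching_range_subset_source[of e] by (auto simp: gen_op_simps fun_eq_iff)

lemma gen_op_GSstar_GS:
  assumes "e \<in> E" "e' \<in> E"
  shows "act (GSstar e) (act (GS e') \<phi>) = (if e = e' then act (GP (r e)) \<phi> else (\<lambda>x. 0))"
  using branching_bij_f[OF assms(1)] branching_ranges_disjoint[OF assms]
  by (auto simp: gen_op_simps fun_eq_iff)

lemma gen_op_GS_GSstar:
  "e \<in> E \<Longrightarrow> act (GS e) (act (GSstar e) \<phi>) x = (if x \<in> RR e then \<phi> x else 0)"
  using branching_bij_inv[of e x] by (auto simp: gen_op_simps)

lemma gen_op_vertex_sum:
  assumes v: "v \<in> V" "finite {e\<in>E. s e = v}" "{e\<in>E. s e = v} \<noteq> {}"
  shows "(\<Sum>e\<in>{e\<in>E. s e = v}. act (GS e) (act (GSstar e) \<phi>) x) = act (GP {v}) \<phi> x"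
proof (cases "x \<in> D {v}")
  case True
  then obtain e0 where e0: "e0 \<in> E" "s e0 = v" "x \<in> RR e0"
    using branching_D_vertex[OF v] by auto
  have "x \<notin> RR e" if "e \<in> E" "e \<noteq> e0" for e
    using branching_ranges_disjoint[OF that(1) e0(1) that(2)] e0(3) by auto
  then have "(\<Sum>e\<in>{e\<in>E. s e = v}. act (GS e) (act (GSstar e) \<phi>) x)
      = (\<Sum>e\<in>{e\<in>E. s e = v}. if e = e0 then \<phi> x else 0)"
    using e0 by (intro sum.cong) (auto simp: gen_op_GS_GSstar)
  also have "\<dots> = \<phi> x" using e0 v(2) by simp
  finally show ?thesis using True by (simp add: gen_op_simps)
next
  case False
  then show ?thesis
    using branching_D_vertex[OF v] by (auto simp: gen_op_GS_GSstar gen_op_simps)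
qed

lemma free_rep_rel:
  assumes "a \<in> lp_rels V E s r"
  shows "free_rep r RR D f a \<phi> x = 0"
  using assms unfolding lp_rels_def
  by (auto simp: free_rep_sub free_rep_add free_rep_mult free_rep_gen free_rep_sum free_rep_zero
      fin_supp_gen fin_supp_mult fin_supp_add fin_supp_sub fin_supp_sum fin_supp_zero
      gen_op_empty gen_op_GP_GP gen_op_GP_union gen_op_source_GS gen_op_GS_range gen_op_range_GSstar
      gen_op_GSstar_source gen_op_GSstar_GS)
    (auto intro!: gen_op_vertex_sum[symmetric])

lemma free_rep_ideal: "a \<in> lp_ideal V E s r \<Longrightarrow> free_rep r RR D f a = (\<lambda>\<phi> x. 0)"
proof (induction rule: lp_ideal.induct)
  case (li_rel a)
  then show ?case by (auto simp: fun_eq_iff free_rep_rel)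
next
  case li_zero
  then show ?case by (rule free_rep_zero)
next
  case (li_add a b)
  then show ?case by (simp add: free_rep_add fin_supp_ideal fun_eq_iff)
next
  case (li_smult a c)
  then show ?case by (simp add: free_rep_smult fin_supp_ideal fun_eq_iff)
next
  case (li_lmult b a)
  then show ?case
    by (simp add: free_rep_mult fin_supp_ideal lp_free_fin_supp is_endo_zero[OF is_endo_free_rep])
next
  case (li_rmult b a)
  then show ?case by (simp add: free_rep_mult fin_supp_ideal lp_free_fin_supp comp_def)
qed

lemma LPA_rep_class:
  assumes "a \<in> lp_free V E r"
  shows "LPA_rep r RR D f (lp_class V E s r a) = free_rep r RR D f a"
proof (intro ext)
  fix \<phi> x
  let ?b = "lp_rep (lp_class V E s r a)"
  have "free_rep r RR D f a \<phi> x - free_rep r RR D f ?b \<phi> x = free_rep r RR D f (fa_sub a ?b) \<phi> x"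
    using lp_free_fin_supp[OF assms] lp_free_fin_supp[OF lp_rep_class(1)[OF assms, where s = s]]
    by (simp add: free_rep_sub)
  also have "\<dots> = 0" using free_rep_ideal[OF lp_rep_class(2)[OF assms]] by simp
  finally show "LPA_rep r RR D f (lp_class V E s r a) \<phi> x = free_rep r RR D f a \<phi> x"
    by (simp add: LPA_rep_def)
qed

lemma LPA_hom_LPA_rep: "LPA_hom V E s r (LPA_rep r RR D f :: _ \<Rightarrow> ('x \<Rightarrow> 'r::comm_ring_1) \<Rightarrow> _)"
  unfolding LPA_hom_def
proof (intro conjI ballI allI)
  fix X assume "X \<in> LPA V E s r"
  then show "is_endo (LPA_rep r RR D f X)" by (simp add: LPA_rep_def is_endo_free_rep)
next
  fix X Y :: "(('v, 'e) ugen list \<Rightarrow> 'r) set" assume "X \<in> LPA V E s r" "Y \<in> LPA V E s r"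
  then obtain a b where ab: "a \<in> lp_free V E r" "b \<in> lp_free V E r"
    "X = lp_class V E s r a" "Y = lp_class V E s r b" by (auto simp: LPA_def)
  then show "LPA_rep r RR D f (LPA_add V E s r X Y) = (\<lambda>\<phi> x. LPA_rep r RR D f X \<phi> x + LPA_rep r RR D f Y \<phi> x)"
    and "LPA_rep r RR D f (LPA_mult V E s r X Y) = LPA_rep r RR D f X \<circ> LPA_rep r RR D f Y"
    using lp_free_fin_supp[OF ab(1)] lp_free_fin_supp[OF ab(2)]
    by (simp_all add: LPA_add_class LPA_mult_class LPA_rep_class lp_free_add lp_free_mult
        free_rep_add free_rep_mult fun_eq_iff)
next
  fix c and X :: "(('v, 'e) ugen list \<Rightarrow> 'r) set" assume "X \<in> LPA V E s r"
  then obtain a where a: "a \<in> lp_free V E r" "X = lp_class V E s r a" by (auto simp: LPA_def)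
  then show "LPA_rep r RR D f (LPA_smult V E s r c X) = (\<lambda>\<phi> x. c * LPA_rep r RR D f X \<phi> x)"
    using lp_free_fin_supp[OF a(1)]
    by (simp add: LPA_smult_class LPA_rep_class lp_free_smult free_rep_smult fun_eq_iff)
qed

lemma branching_rep_on_gens_LPA_rep: "branching_rep_on_gens V E s r RR D f (LPA_rep r RR D f)"
  by (simp add: branching_rep_on_gens_iff LPA_rep_class lp_free_gen free_rep_gen)

lemma LPA_hom_eq_LPA_rep:
  assumes "LPA_hom V E s r \<pi>" "branching_rep_on_gens V E s r RR D f \<pi>" "X \<in> LPA V E s r"
  shows "\<pi> X = LPA_rep r RR D f X"
proof -
  obtain a where "a \<in> lp_free V E r" "X = lp_class V E s r a" using assms(3) by (auto simp: LPA_def)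
  then show ?thesis
    using LPA_hom_class_eq_free_rep[OF assms(1)] assms(2)
    by (simp add: branching_rep_on_gens_iff LPA_rep_class)
qed

end

theorem mainTheorem4:
  fixes V :: "'v set" and E :: "'e set" and s :: "'e \<Rightarrow> 'v" and r :: "'e \<Rightarrow> 'v set"
    and RR :: "'e \<Rightarrow> 'x set" and D :: "'v set \<Rightarrow> 'x set" and f :: "'e \<Rightarrow> 'x \<Rightarrow> 'x"
  assumes "ultragraph V E s r"
    and "branching_system V E s r RR D f"
  shows "\<exists>\<pi> :: (('v, 'e) ugen list \<Rightarrow> 'r::comm_ring_1) set \<Rightarrow> ('x \<Rightarrow> 'r) \<Rightarrow> ('x \<Rightarrow> 'r).
           LPA_hom V E s r \<pi> \<and> branching_rep_on_gens V E s r RR D f \<pi>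
           \<and> (\<forall>\<pi>'. LPA_hom V E s r \<pi>' \<and> branching_rep_on_gens V E s r RR D f \<pi>'
                  \<longrightarrow> (\<forall>X\<in>LPA V E s r. \<pi>' X = \<pi> X))"
  using LPA_hom_LPA_rep[OF assms(2)] branching_rep_on_gens_LPA_rep[OF assms(2)]
    LPA_hom_eq_LPA_rep[OF assms(2)] by blast

end
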